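(* Let $t>0$ and $\kappa\in(-1,1)$, and put $\epsilon:=\kappa^2$. The map $\phi_{\kappa,t}$ satisfies $\phi_{\kappa,t}(1)=0$ and $\partial_z\phi_{\kappa,t}(1)\neq 0$, so it is locally invertible near $z=1$, with local inverse $\phi_{\kappa,t}^{-1}(u)=1+\sum_{n\ge1}a_n(\kappa,t)u^n$ near $u=0$. For every $n\geq 1$, $$a_n(\kappa,t)=\frac{2}{2^{2n}n}\sum_{k=1}^{n}\binom{2n}{n-k}e^{-kt}\left\{\sum_{m=0}^{k-1}L_{k-m-1}^{(m+1)}(2kt)\,2^{m}\,P_n^{(m)}(\epsilon)\right\}.$$
   Context: Pochhammer symbol: $(a)_0=1$, $(a)_k=a(a+1)\cdots(a+k-1)$ for $k\geq1$ (so $(0)_k=\delta_{k0}$). Laguerre polynomials: for $n\ge0$ and $a\in\mathbb{R}$, $L_n^{(a)}(x):=\frac{1}{n!}\sum_{j=0}^n\frac{(-n)_j}{j!}(a+j+1)_{n-j}x^j$. Let $\alpha(z):=\frac{1-\sqrt{1-z}}{1+\sqrt{1-z}}$ (principal branch), a bijection of $\mathbb{C}\setminus[1,\infty)$ onto the open unit disc $\mathbb{D}$ with inverse $\alpha^{-1}(z)=\frac{4z}{(1+z)^2}$. For $t>0$ let $\xi_{2t}(z):=\frac{z-1}{z+1}e^{tz}$. Define $\phi_{\kappa,t}(z):=\frac{z^2}{z^2-\kappa^2}\,\alpha^{-1}(\xi_{2t}(z))$ near $z=1$, and (Lagrange inversion coefficients) $a_n(\kappa,t):=\frac{1}{n!}\partial_z^{n-1}\left[\frac{z-1}{\phi_{\kappa,t}(z)}\right]^n\Big|_{z=1}$,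 $n\ge1$. For integers $n\geq1$, $m\geq0$, define the polynomial $P_n^{(m)}(\epsilon):=\frac{(-1)^m}{m!}\sum_{k=0}^n\binom{n}{k}(-\epsilon)^k(2k)_m$. *)

theory Defs
  imports "HOL-Analysis.Analysis"
begin

definition laguerre :: "nat \<Rightarrow> real \<Rightarrow> real \<Rightarrow> real" where
  "laguerre n a x = (1 / fact n) *
     (\<Sum>j=0..n. pochhammer (- real n) j / fact j * pochhammer (a + real j + 1) (n - j) * x ^ j)"

definition Ppoly :: "nat \<Rightarrow> nat \<Rightarrow> real \<Rightarrow> real" where
  "Ppoly n m eps = (-1) ^ m / fact m *
     (\<Sum>k=0..n. real (n choose k) * (- eps) ^ k * pochhammer (2 * real k) m)"

definition alpha_inv :: "complex \<Rightarrow> complex" where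
  "alpha_inv w = 4 * w / (1 + w) ^ 2"

definition xi2t :: "real \<Rightarrow> complex \<Rightarrow> complex" where
  "xi2t t z = (z - 1) / (z + 1) * exp (complex_of_real t * z)"

definition phi :: "real \<Rightarrow> real \<Rightarrow> complex \<Rightarrow> complex" where
  "phi \<kappa> t z = z ^ 2 / (z ^ 2 - (complex_of_real \<kappa>) ^ 2) * alpha_inv (xi2t t z)"

definition lag_base :: "real \<Rightarrow> real \<Rightarrow> complex \<Rightarrow> complex" where
  "lag_base \<kappa> t z = (if z = 1 then Lim (at 1) (\<lambda>w. (w - 1) / phi \<kappa> t w)
                      else (z - 1) / phi \<kappa> t z)"

text \<open>Lagrange inversion coefficients a_n = 1/n! d^{n-1}/dz^{n-1} [(z-1)/phi(z)]^n at z = 1.\<close>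
definition a_coef :: "real \<Rightarrow> real \<Rightarrow> nat \<Rightarrow> complex" where
  "a_coef \<kappa> t n = (deriv ^^ (n - 1)) (\<lambda>z. (lag_base \<kappa> t z) ^ n) 1 / fact n"

end

theory Submission
  imports Defs "HOL-Complex_Analysis.Complex_Analysis"
begin

text \<open>Write \<open>\<phi>(z) = (z - 1) \<psi>(z)\<close> with \<open>\<psi>\<close> analytic and nonzero at \<open>1\<close>. Then \<open>\<phi>\<close> is locally
  invertible at \<open>1\<close>, and Lagrange inversion identifies \<open>n a\<^sub>n\<close> with the coefficient of
  \<open>w^(n-1)\<close> in \<open>\<psi>(1 + w)^(-n)\<close>. With \<open>z = 1 + w\<close> and \<open>E = (z + 1) e^(-tz)\<close> one has
  \<open>1/\<psi> = (1/4) (1 - \<kappa>\<^sup>2/z\<^sup>2) (1 + w/E)\<^sup>2 E\<close>. Expanding \<open>(1 + w/E)^(2n)\<close> binomially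
  reduces the coefficient to \<open>\<Sum>\<^sub>k C(2n, n - k) [w^(k-1)] (1 - \<kappa>\<^sup>2/z\<^sup>2)^n E^k\<close>; the
  coefficients of the first factor are \<open>P\<^sub>n\<^sup>(\<^sup>m\<^sup>)(\<kappa>\<^sup>2)\<close> and those of \<open>E^k\<close> are
  Laguerre polynomials in \<open>2kt\<close>.\<close>

lemma fps_nth_inverse_power_plus_X_deriv:
  fixes P :: "'a::field_char_0 fps"
  assumes "P $ 0 \<noteq> 0"
  shows "(inverse P ^ j + fps_X * inverse P ^ Suc j * fps_deriv P) $ j = (if j = 0 then 1 else 0)"
proof (cases "j = 0")
  case False
  define G where "G = inverse P"
  have "fps_deriv G = - fps_deriv P * G\<^sup>2"
    unfolding G_def using assms by (rule fps_inverse_deriv)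
  then have "fps_deriv (G ^ j) = - of_nat j * (fps_deriv P * G ^ Suc j)"
    using False by (simp add: fps_deriv_power' power2_eq_square algebra_simps
                         power_Suc[symmetric] del: power_Suc)
  then have "fps_X * fps_deriv (G ^ j) = - (of_nat j * (fps_X * G ^ Suc j * fps_deriv P))"
    by (simp add: algebra_simps)
  then have "of_nat j * (fps_X * G ^ Suc j * fps_deriv P) $ j = - (fps_X * fps_deriv (G ^ j)) $ j"
    by (simp only: fps_neg_nth fps_mult_of_nat_nth) simp
  also have "\<dots> = - of_nat j * (G ^ j) $ j"
    using False by (simp only: fps_neg_nth fps_X_mult_nth fps_deriv_nth) simp
  finally have "of_nat j * (fps_X * G ^ Suc j * fps_deriv P) $ j = of_nat j * - (G ^ j) $ j"
    by simp
  then have "(fps_X * G ^ Suc j * fps_deriv P) $ j = - (G ^ j) $ j"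
    using False by (subst (asm) mult_left_cancel) auto
  then show ?thesis
    using False by (simp add: G_def)
qed simp

text \<open>The residue identity behind Lagrange inversion, for \<open>F = X P\<close>.\<close>
lemma fps_lagrange_residue:
  fixes P :: "'a::field_char_0 fps"
  assumes P0: "P $ 0 \<noteq> 0" and "1 \<le> k" "k \<le> n"
  shows "(inverse P ^ n * ((fps_X * P) ^ (k - 1) * fps_deriv (fps_X * P))) $ (n - 1)
           = (if k = n then 1 else 0)"
proof -
  define G where "G = inverse P"
  define j where "j = n - k"
  have GP: "G * P = 1"
    unfolding G_def using P0 by (rule inverse_mult_eq_1)
  have n: "n = (k - 1) + Suc j"
    using assms by (simp add: j_def)
  have "G ^ (k - 1) * (fps_X * P) ^ (k - 1) = fps_X ^ (k - 1)"
    by (simp add: power_mult_distrib[symmetric] GP mult_ac)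
  moreover have "G ^ Suc j * fps_deriv (fps_X * P) = G ^ j + fps_X * G ^ Suc j * fps_deriv P"
  proof -
    have "G ^ Suc j * fps_deriv (fps_X * P) = G ^ j * (G * P) + fps_X * G ^ Suc j * fps_deriv P"
      by (simp add: fps_deriv_mult power_Suc algebra_simps)
    then show ?thesis
      by (simp add: GP)
  qed
  moreover have "inverse P ^ n * ((fps_X * P) ^ (k - 1) * fps_deriv (fps_X * P))
      = (G ^ (k - 1) * (fps_X * P) ^ (k - 1)) * (G ^ Suc j * fps_deriv (fps_X * P))"
    unfolding G_def[symmetric] n power_add by (simp only: mult_ac)
  ultimately have "inverse P ^ n * ((fps_X * P) ^ (k - 1) * fps_deriv (fps_X * P))
      = fps_X ^ (k - 1) * (G ^ j + fps_X * G ^ Suc j * fps_deriv P)"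
    by simp
  then have "(inverse P ^ n * ((fps_X * P) ^ (k - 1) * fps_deriv (fps_X * P))) $ (n - 1)
      = (G ^ j + fps_X * G ^ Suc j * fps_deriv P) $ j"
    using n by (simp add: fps_X_power_mult_nth)
  also have "\<dots> = (if j = 0 then 1 else 0)"
    unfolding G_def by (rule fps_nth_inverse_power_plus_X_deriv[OF P0])
  finally show ?thesis
    using assms by (simp add: j_def)
qed

lemma fps_compose_nth_truncation:
  fixes G H :: "'a::comm_ring_1 fps"
  assumes "G $ 0 = 0" "m \<le> n"
  shows "fps_compose H G $ m = (\<Sum>k=0..n. fps_const (H $ k) * G ^ k) $ m"
proof -
  have "fps_compose H G $ m = (\<Sum>k=0..m. H $ k * (G ^ k) $ m)"
    by (rule fps_compose_nth)
  also have "\<dots> = (\<Sum>k=0..n. H $ k * (G ^ k) $ m)"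
    using assms startsby_zero_power_prefix[OF assms(1)] by (intro sum.mono_neutral_left) auto
  finally show ?thesis
    by (simp add: fps_sum_nth)
qed

text \<open>Differentiating \<open>H(F) = c + X\<close> termwise and pairing with \<open>P\<^sup>-\<^sup>n\<close> isolates
  the term \<open>k = n\<close> by the residue identity.\<close>
lemma fps_lagrange_inversion:
  fixes H P :: "'a::field_char_0 fps"
  assumes P0: "P $ 0 \<noteq> 0" and comp: "fps_compose H (fps_X * P) = fps_const c + fps_X"
    and n: "n \<ge> 1"
  shows "of_nat n * H $ n = (inverse P ^ n) $ (n - 1)"
proof -
  define F where "F = fps_X * P"
  define T where "T = (\<Sum>k=0..n. fps_const (H $ k) * F ^ k)"
  have T_nth: "T $ m = (fps_const c + fps_X) $ m" if "m \<le> n" for m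
    using fps_compose_nth_truncation[of "fps_X * P" m n H] that comp by (simp add: T_def F_def)
  define D where "D = 1 - fps_deriv T"
  have D_nth: "D $ i = 0" if "i < n" for i
  proof -
    have "D $ i = (fps_deriv (fps_const c + fps_X) - fps_deriv T) $ i"
      by (simp add: D_def)
    also have "\<dots> = of_nat (Suc i) * ((fps_const c + fps_X) $ Suc i - T $ Suc i)"
      by (simp only: fps_sub_nth fps_deriv_nth right_diff_distrib Suc_eq_plus1)
    finally show ?thesis
      using that T_nth[of "Suc i"] by simp
  qed
  have "(inverse P ^ n * D) $ (n - 1) = 0"
    unfolding fps_mult_nth using n by (intro sum.neutral) (auto simp: D_nth)
  then have "(inverse P ^ n) $ (n - 1) = (inverse P ^ n * fps_deriv T) $ (n - 1)"
    by (simp add: D_def algebra_simps)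
  also have "fps_deriv T = (\<Sum>k=0..n. fps_const (H $ k * of_nat k) * (F ^ (k - 1) * fps_deriv F))"
    unfolding T_def
    by (simp add: fps_deriv_sum fps_deriv_power' fps_of_nat[symmetric]
                  fps_const_mult[symmetric] mult_ac del: fps_const_mult)
  also have "(inverse P ^ n * \<dots>) $ (n - 1)
      = (\<Sum>k=0..n. H $ k * of_nat k * (inverse P ^ n * (F ^ (k - 1) * fps_deriv F)) $ (n - 1))"
    unfolding sum_distrib_left fps_sum_nth
    by (intro sum.cong refl) (simp only: mult.left_commute[of "inverse P ^ n"] fps_mult_left_const_nth)
  also have "\<dots> = (\<Sum>k=0..n. if k = n then H $ n * of_nat n else 0)"
  proof (intro sum.cong refl)
    fix k assume "k \<in> {0..n}"
    then show "H $ k * of_nat k * (inverse P ^ n * (F ^ (k - 1) * fps_deriv F)) $ (n - 1)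
        = (if k = n then H $ n * of_nat n else 0)"
      using fps_lagrange_residue[OF P0, of k n] by (cases "k = 0") (auto simp: F_def)
  qed
  finally show ?thesis
    using n by (simp add: mult.commute)
qed

lemma fps_nth_fps_expansion_at:
  fixes h :: "complex \<Rightarrow> complex"
  assumes "(\<lambda>w. h (z + w)) has_fps_expansion F"
  shows "F $ n = (deriv ^^ n) h z / fact n"
proof -
  have "F = fps_expansion h z"
    using assms analytic_at_imp_has_fps_expansion[OF has_fps_expansion_imp_analytic[OF assms]]
    by (rule fps_expansion_unique_complex)
  then show ?thesis
    by (simp add: fps_expansion_def)
qed

lemma analytic_local_inverse:
  fixes f :: "complex \<Rightarrow> complex"
  assumes "f analytic_on {z0}" "deriv f z0 \<noteq> 0"
  obtains s g where "s > 0" "g holomorphic_on ball (f z0) s" "\<And>u. u \<in> ball (f z0) s \<Longrightarrow> f (g u) = u"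
    "eventually (\<lambda>w. g (f (z0 + w)) = z0 + w) (nhds 0)"
proof -
  obtain S where S: "open S" "z0 \<in> S" "f holomorphic_on S"
    using assms(1) analytic_at by blast
  obtain r where r: "r > 0" "ball z0 r \<subseteq> S" "open (f ` ball z0 r)" "inj_on f (ball z0 r)"
    using has_complex_derivative_locally_invertible[OF S(3,2,1) assms(2)] by blast
  obtain g where g: "g holomorphic_on f ` ball z0 r" "\<And>z. z \<in> ball z0 r \<Longrightarrow> g (f z) = z"
    using holomorphic_has_inverse[OF holomorphic_on_subset[OF S(3) r(2)] open_ball r(4)] by metis
  obtain s where s: "s > 0" "ball (f z0) s \<subseteq> f ` ball z0 r"
    using r(1,3) openE[of "f ` ball z0 r" "f z0"] by auto
  show ?thesis
  proof (rule that[of s g])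
    show "g holomorphic_on ball (f z0) s"
      using g(1) s(2) by (rule holomorphic_on_subset)
    show "f (g u) = u" if "u \<in> ball (f z0) s" for u
      using that s(2) g(2) by auto
    have "eventually (\<lambda>w. w \<in> ball 0 r) (nhds (0::complex))"
      using r(1) by (intro eventually_nhds_in_open) auto
    then show "eventually (\<lambda>w. g (f (z0 + w)) = z0 + w) (nhds 0)"
      by eventually_elim (simp add: g(2) dist_norm)
  qed (use s in auto)
qed

definition lagrange_coeff :: "(complex \<Rightarrow> complex) \<Rightarrow> complex \<Rightarrow> nat \<Rightarrow> complex" where
  "lagrange_coeff p z0 n = (deriv ^^ (n - 1)) (\<lambda>z. inverse (p z) ^ n) z0 / fact n"

lemma simple_zero_has_field_derivative:
  assumes "p field_differentiable at z0"
  shows "((\<lambda>z. (z - z0) * p z) has_field_derivative p z0) (at z0)"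
proof -
  have "(p has_field_derivative deriv p z0) (at z0)"
    using assms by (rule field_differentiable_derivI)
  then show ?thesis
    by (auto intro!: derivative_eq_intros)
qed

lemma local_inverse_taylor_coeff:
  fixes f p g :: "complex \<Rightarrow> complex"
  assumes f: "\<And>z. f z = (z - z0) * p z" and p: "p analytic_on {z0}" "p z0 \<noteq> 0"
    and g: "g analytic_on {0}" and g_left_inv: "eventually (\<lambda>w. g (f (z0 + w)) = z0 + w) (nhds 0)"
    and n: "n \<ge> 1"
  shows "(deriv ^^ n) g 0 / fact n = lagrange_coeff p z0 n"
proof -
  define H where "H = fps_expansion g 0"
  define P where "P = fps_expansion p z0"
  have H: "g has_fps_expansion H"
    unfolding H_def using g by (rule analytic_at_imp_has_fps_expansion_0)
  have P: "(\<lambda>w. p (z0 + w)) has_fps_expansion P"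
    unfolding P_def using p(1) by (rule analytic_at_imp_has_fps_expansion)
  have P0: "P $ 0 \<noteq> 0"
    using p(2) by (simp add: P_def fps_expansion_def)
  have "(\<lambda>w. w * p (z0 + w)) has_fps_expansion fps_X * P"
    by (intro fps_expansion_intros P)
  then have "(\<lambda>w. f (z0 + w)) has_fps_expansion fps_X * P"
    by (simp add: f)
  from has_fps_expansion_compose[OF H this]
  have "(\<lambda>w. g (f (z0 + w))) has_fps_expansion fps_compose H (fps_X * P)"
    by (simp add: o_def)
  moreover have "(\<lambda>w. g (f (z0 + w))) has_fps_expansion fps_const z0 + fps_X"
    using has_fps_expansion_cong[OF g_left_inv refl] by (auto intro!: fps_expansion_intros)
  ultimately have "fps_compose H (fps_X * P) = fps_const z0 + fps_X"
    by (rule fps_expansion_unique_complex)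
  from fps_lagrange_inversion[OF P0 this n]
  have "of_nat n * H $ n = (inverse P ^ n) $ (n - 1)" .
  also have "\<dots> = (deriv ^^ (n - 1)) (\<lambda>z. inverse (p z) ^ n) z0 / fact (n - 1)"
    using P P0 by (intro fps_nth_fps_expansion_at fps_expansion_intros)
  also have "\<dots> = of_nat n * lagrange_coeff p z0 n"
    using n by (simp add: lagrange_coeff_def fact_reduce field_simps)
  finally have "H $ n = lagrange_coeff p z0 n"
    using n by (subst (asm) mult_left_cancel) auto
  then show ?thesis
    by (simp add: H_def fps_expansion_def)
qed

lemma analytic_lagrange_inversion:
  fixes f p :: "complex \<Rightarrow> complex"
  assumes f: "\<And>z. f z = (z - z0) * p z" and p: "p analytic_on {z0}" "p z0 \<noteq> 0"
  shows "\<exists>r>0. \<forall>u. norm u < r \<longrightarrow>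
           summable (\<lambda>n. lagrange_coeff p z0 (Suc n) * u ^ Suc n) \<and>
           f (z0 + (\<Sum>n. lagrange_coeff p z0 (Suc n) * u ^ Suc n)) = u"
proof -
  have f_fun: "f = (\<lambda>z. (z - z0) * p z)"
    using f by blast
  have f_deriv: "(f has_field_derivative p z0) (at z0)"
    unfolding f_fun using analytic_on_imp_differentiable_at[OF p(1)]
    by (intro simple_zero_has_field_derivative) simp
  have "f analytic_on {z0}"
    unfolding f_fun using p(1) by (intro analytic_intros)
  moreover have "deriv f z0 \<noteq> 0"
    using DERIV_imp_deriv[OF f_deriv] p(2) by simp
  ultimately obtain r g where r: "r > 0" and g: "g holomorphic_on ball 0 r"
    and g_inv: "\<And>u. u \<in> ball 0 r \<Longrightarrow> f (g u) = u"
    and g_left_inv: "eventually (\<lambda>w. g (f (z0 + w)) = z0 + w) (nhds 0)"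
    using analytic_local_inverse by (metis f diff_self mult_zero_left)
  have g0: "g 0 = z0"
    using g_left_inv[THEN eventually_nhds_x_imp_x] f by simp
  have "g analytic_on {0}"
    using g r by (intro holomorphic_on_imp_analytic_at) auto
  note coeff = local_inverse_taylor_coeff[OF f p this g_left_inv]
  have "(\<lambda>n. lagrange_coeff p z0 (Suc n) * u ^ Suc n) sums (g u - z0)" if "norm u < r" for u
  proof -
    have "(\<lambda>n. (deriv ^^ n) g 0 / fact n * (u - 0) ^ n) sums g u"
      using holomorphic_power_series[OF g] that by simp
    then have "(\<lambda>n. (deriv ^^ Suc n) g 0 / fact (Suc n) * u ^ Suc n) sums (g u - z0)"
      using g0 by (subst sums_Suc_iff) simp
    moreover have "(deriv ^^ Suc n) g 0 / fact (Suc n) = lagrange_coeff p z0 (Suc n)" for n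
      by (rule coeff) simp
    ultimately show ?thesis
      by (simp only:)
  qed
  then show ?thesis
    using r g_inv by (metis add.commute diff_add_cancel mem_ball_0 sums_iff)
qed

definition xi_quot :: "real \<Rightarrow> complex \<Rightarrow> complex" where
  "xi_quot t z = exp (complex_of_real t * z) / (z + 1)"

definition psi :: "real \<Rightarrow> real \<Rightarrow> complex \<Rightarrow> complex" where
  "psi \<kappa> t z = z\<^sup>2 / (z\<^sup>2 - (complex_of_real \<kappa>)\<^sup>2) *
     (4 * xi_quot t z / (1 + (z - 1) * xi_quot t z)\<^sup>2)"

lemma phi_eq_mult_psi: "phi \<kappa> t z = (z - 1) * psi \<kappa> t z"
proof -
  have "xi2t t z = (z - 1) * xi_quot t z"
    unfolding xi2t_def xi_quot_def by simp
  then show ?thesis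
    unfolding phi_def alpha_inv_def psi_def by (simp add: mult_ac)
qed

lemma psi_at_1: "psi \<kappa> t 1 = 2 * exp (complex_of_real t) / (1 - (complex_of_real \<kappa>)\<^sup>2)"
  unfolding psi_def xi_quot_def by simp

lemma one_minus_square_neq_0:
  assumes "\<kappa>\<^sup>2 \<noteq> 1"
  shows "1 - (complex_of_real \<kappa>)\<^sup>2 \<noteq> 0"
proof -
  have "complex_of_real (\<kappa>\<^sup>2) \<noteq> 1"
    using assms of_real_eq_1_iff by blast
  then show ?thesis
    by simp
qed

lemma psi_at_1_neq_0: "\<kappa>\<^sup>2 \<noteq> 1 \<Longrightarrow> psi \<kappa> t 1 \<noteq> 0"
  using one_minus_square_neq_0 by (simp add: psi_at_1)

lemma psi_analytic: "\<kappa>\<^sup>2 \<noteq> 1 \<Longrightarrow> psi \<kappa> t analytic_on {1}"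
  unfolding psi_def xi_quot_def using one_minus_square_neq_0 by (intro analytic_intros) auto

lemma lag_base_eq_inverse_psi:
  assumes "\<kappa>\<^sup>2 \<noteq> 1"
  shows "lag_base \<kappa> t = (\<lambda>z. inverse (psi \<kappa> t z))"
proof
  have off_1: "(w - 1) / phi \<kappa> t w = inverse (psi \<kappa> t w)" if "w \<noteq> 1" for w
    using that by (simp add: phi_eq_mult_psi inverse_eq_divide)
  have "isCont (\<lambda>z. inverse (psi \<kappa> t z)) 1"
    using assms psi_at_1_neq_0 by (intro analytic_at_imp_isCont analytic_intros psi_analytic) auto
  then have "((\<lambda>w. (w - 1) / phi \<kappa> t w) \<longlongrightarrow> inverse (psi \<kappa> t 1)) (at 1)"
    unfolding isCont_def by (rule tendsto_cong[THEN iffD1, rotated]) (simp add: eventually_at_filter off_1)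
  then have "Lim (at 1) (\<lambda>w. (w - 1) / phi \<kappa> t w) = inverse (psi \<kappa> t 1)"
    by (intro tendsto_Lim) simp_all
  then show "lag_base \<kappa> t z = inverse (psi \<kappa> t z)" for z
    by (simp add: lag_base_def off_1)
qed

definition kappa_fps :: "real \<Rightarrow> complex fps" where
  "kappa_fps \<kappa> = 1 - fps_const ((complex_of_real \<kappa>)\<^sup>2) * inverse ((1 + fps_X)\<^sup>2)"

definition exp_fps :: "real \<Rightarrow> complex fps" where
  "exp_fps t = (2 + fps_X) * fps_const (exp (- complex_of_real t)) * fps_exp (- complex_of_real t)"

text \<open>The expansion of \<open>(z - 1)/\<phi>(z)\<close> at \<open>z = 1 + X\<close>: here \<open>kappa_fps\<close> stands for
  \<open>(z\<^sup>2 - \<kappa>\<^sup>2)/z\<^sup>2\<close> and \<open>exp_fps\<close> for \<open>(z - 1)/\<xi>\<^sub>2\<^sub>t(z) = (z + 1) e\<^sup>-\<^sup>t\<^sup>z\<close>.\<close>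
definition lag_base_fps :: "real \<Rightarrow> real \<Rightarrow> complex fps" where
  "lag_base_fps \<kappa> t = fps_const (1/4) * kappa_fps \<kappa> * (1 + fps_X * inverse (exp_fps t))\<^sup>2 * exp_fps t"

lemma exp_fps_nth_0: "exp_fps t $ 0 \<noteq> 0"
  by (simp add: exp_fps_def)

lemma inverse_psi_has_fps_expansion:
  "(\<lambda>w. inverse (psi \<kappa> t (1 + w))) has_fps_expansion lag_base_fps \<kappa> t"
proof -
  define c where "c = complex_of_real \<kappa>"
  define s where "s = complex_of_real t"
  define E where "E = (\<lambda>w::complex. (2 + w) * exp (- s) * exp (- s * w))"
  have "E has_fps_expansion exp_fps t"
    unfolding E_def exp_fps_def s_def by (intro fps_expansion_intros)
  then have expansion: "(\<lambda>w. 1/4 * (1 - c\<^sup>2 * inverse ((1 + w)\<^sup>2)) * (1 + w * inverse (E w))\<^sup>2 * E w)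
      has_fps_expansion lag_base_fps \<kappa> t"
    unfolding lag_base_fps_def kappa_fps_def c_def
    by (intro fps_expansion_intros exp_fps_nth_0) simp
  have ev: "eventually (\<lambda>w. 1/4 * (1 - c\<^sup>2 * inverse ((1 + w)\<^sup>2)) * (1 + w * inverse (E w))\<^sup>2 * E w
      = inverse (psi \<kappa> t (1 + w))) (nhds 0)"
  proof (rule eventually_mono[OF eventually_nhds_in_open[of "ball 0 1"]])
    fix w :: complex
    assume "w \<in> ball 0 1"
    then have "1 + w \<noteq> 0"
      by (metis add.commute add_eq_0_iff2 dist_0_norm mem_ball norm_minus_cancel norm_one order.irrefl)
    moreover have "E w = inverse (xi_quot t (1 + w))"
      by (simp add: E_def xi_quot_def s_def exp_minus exp_add[symmetric] algebra_simps field_simps)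
    ultimately show "1/4 * (1 - c\<^sup>2 * inverse ((1 + w)\<^sup>2)) * (1 + w * inverse (E w))\<^sup>2 * E w
      = inverse (psi \<kappa> t (1 + w))"
      unfolding psi_def c_def by (simp add: field_simps inverse_mult_distrib)
  qed auto
  show ?thesis
    using has_fps_expansion_cong[OF ev refl] expansion by simp
qed

lemma a_coef_eq_lagrange_coeff:
  assumes "\<kappa>\<^sup>2 \<noteq> 1"
  shows "a_coef \<kappa> t = lagrange_coeff (psi \<kappa> t) 1"
  using assms by (simp add: fun_eq_iff a_coef_def lagrange_coeff_def lag_base_eq_inverse_psi)

lemma a_coef_eq_fps_nth:
  assumes "\<kappa>\<^sup>2 \<noteq> 1" "n \<ge> 1"
  shows "a_coef \<kappa> t n = (lag_base_fps \<kappa> t ^ n) $ (n - 1) / of_nat n"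
proof -
  have "(lag_base_fps \<kappa> t ^ n) $ (n - 1)
      = (deriv ^^ (n - 1)) (\<lambda>z. inverse (psi \<kappa> t z) ^ n) 1 / fact (n - 1)"
    by (intro fps_nth_fps_expansion_at fps_expansion_intros inverse_psi_has_fps_expansion)
  then show ?thesis
    using assms by (simp add: a_coef_eq_lagrange_coeff lagrange_coeff_def fact_reduce field_simps)
qed

lemma fps_X_plus_const_power_nth:
  "((fps_X + fps_const a) ^ k) $ i = of_nat (k choose i) * (a :: 'a::comm_ring_1) ^ (k - i)"
proof -
  have "(fps_X + fps_const a) ^ k = (\<Sum>l\<le>k. fps_const (of_nat (k choose l) * a ^ (k - l)) * fps_X ^ l)"
    unfolding binomial_ring by (intro sum.cong refl) (simp add: fps_of_nat[symmetric] mult_ac)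
  then have "((fps_X + fps_const a) ^ k) $ i = (\<Sum>l\<le>k. of_nat (k choose l) * a ^ (k - l) * (if i = l then 1 else 0))"
    by (simp add: fps_sum_nth)
  also have "\<dots> = of_nat (k choose i) * a ^ (k - i)"
    by (cases "i \<le> k") (simp_all add: binomial_eq_0 sum.delta' if_distrib[of "\<lambda>x. _ * x"] cong: if_cong)
  finally show ?thesis .
qed

text \<open>Expanding \<open>(1 + X U)\<^sup>N\<close> binomially and using \<open>U = V\<^sup>-\<^sup>1\<close>, only the terms
  \<open>X\<^sup>j V\<^sup>n\<^sup>-\<^sup>j\<close> with \<open>j < n\<close> reach the coefficient of \<open>X\<^sup>n\<^sup>-\<^sup>1\<close>.\<close>
lemma fps_nth_mult_one_plus_X_power:
  fixes U V B :: "'a::comm_ring_1 fps"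
  assumes UV: "U * V = 1" and n: "n \<ge> 1"
  shows "(B * (1 + fps_X * U) ^ N * V ^ n) $ (n - 1)
           = (\<Sum>k=1..n. of_nat (N choose (n - k)) * (B * V ^ k) $ (k - 1))"
proof -
  define summand where "summand j = of_nat (N choose j) * (if n - 1 < j then 0 else (B * U ^ j * V ^ n) $ (n - 1 - j))"
    for j
  have "(1 + fps_X * U) ^ N = (\<Sum>j\<le>N. of_nat (N choose j) * (fps_X * U) ^ j)"
    using binomial_ring[of "fps_X * U" 1 N] by (simp add: add.commute)
  then have "B * (1 + fps_X * U) ^ N * V ^ n
      = (\<Sum>j\<le>N. of_nat (N choose j) * (fps_X ^ j * (B * U ^ j * V ^ n)))"
    by (simp add: sum_distrib_left sum_distrib_right power_mult_distrib mult_ac)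
  then have "(B * (1 + fps_X * U) ^ N * V ^ n) $ (n - 1) = (\<Sum>j\<le>N. summand j)"
    by (simp add: summand_def fps_sum_nth fps_X_power_mult_nth del: One_nat_def)
  also have "\<dots> = (\<Sum>j\<le>N + n. summand j)"
    by (intro sum.mono_neutral_left) (auto simp: summand_def binomial_eq_0)
  also have "\<dots> = (\<Sum>j<n. summand j)"
    using n by (intro sum.mono_neutral_right) (auto simp: summand_def)
  also have "\<dots> = (\<Sum>j<n. of_nat (N choose j) * (B * V ^ (n - j)) $ (n - 1 - j))"
  proof (intro sum.cong refl)
    fix j assume "j \<in> {..<n}"
    then have "B * U ^ j * V ^ n = B * V ^ (n - j) * (U * V) ^ j"
      by (simp add: power_mult_distrib power_add[symmetric] mult_ac)
    then show "summand j = of_nat (N choose j) * (B * V ^ (n - j)) $ (n - 1 - j)"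
      using \<open>j \<in> {..<n}\<close> UV by (auto simp: summand_def)
  qed
  also have "\<dots> = (\<Sum>k=1..n. of_nat (N choose (n - k)) * (B * V ^ k) $ (k - 1))"
    by (rule sum.reindex_bij_witness[where i="\<lambda>k. n - k" and j="\<lambda>j. n - j"]) auto
  finally show ?thesis .
qed

lemma pochhammer_of_nat_plus_1: "pochhammer (real a + 1) b = fact (a + b) / fact a"
proof -
  have "pochhammer (1::real) (a + b) = pochhammer 1 a * pochhammer (1 + of_nat a) b"
    by (rule pochhammer_product')
  then have "fact (a + b) = (fact a * pochhammer (real a + 1) b :: real)"
    by (simp add: pochhammer_fact add.commute)
  then show ?thesis
    by (simp add: field_simps)
qed

lemma laguerre_binomial_term:
  assumes k: "k = m + 1 + p" and j: "j \<le> p"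
  shows "real (k choose (p - j)) * 2 ^ (k - (p - j)) * (- x) ^ j / fact j
       = 2 ^ (m + 1) * (1 / fact p) * (pochhammer (- real p) j / fact j
          * pochhammer (real m + 1 + real j + 1) (p - j) * (2 * x) ^ j)"
proof -
  have kpj: "k - (p - j) = m + j + 1"
    using j k by simp
  have "pochhammer (- real p) j = (-1) ^ j * pochhammer (real (p - j) + 1) j"
    using j by (simp add: pochhammer_minus of_nat_diff)
  also have "\<dots> = (-1) ^ j * (fact p / fact (p - j))"
    using pochhammer_of_nat_plus_1[of "p - j" j] j by simp
  finally have P1: "pochhammer (- real p) j = (-1) ^ j * (fact p / fact (p - j))" .
  have "pochhammer (real m + 1 + real j + 1) (p - j) = pochhammer (real (m + j + 1) + 1) (p - j)"
    by (simp add: add_ac)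
  also have "\<dots> = fact k / fact (m + j + 1)"
    using pochhammer_of_nat_plus_1[of "m + j + 1" "p - j"] j k by simp
  finally have P2: "pochhammer (real m + 1 + real j + 1) (p - j) = fact k / fact (m + j + 1)" .
  have C: "real (k choose (p - j)) = fact k / (fact (p - j) * fact (m + j + 1))"
    using binomial_fact[of "p - j" k, where 'a=real] j k kpj by simp
  show ?thesis
    unfolding P1 P2 C kpj power_add power_minus[of x] power_mult_distrib
    by (simp add: field_simps)
qed

lemma laguerre_binomial_sum:
  assumes "k = m + 1 + p"
  shows "(\<Sum>i=0..p. real (k choose i) * 2 ^ (k - i) * (- x) ^ (p - i) / fact (p - i))
           = 2 ^ (m + 1) * laguerre p (real m + 1) (2 * x)"
proof -
  have "(\<Sum>i=0..p. real (k choose i) * 2 ^ (k - i) * (- x) ^ (p - i) / fact (p - i))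
      = (\<Sum>j=0..p. real (k choose (p - j)) * 2 ^ (k - (p - j)) * (- x) ^ j / fact j)"
    by (subst sum.atLeastAtMost_rev) (intro sum.cong refl, auto)
  also have "\<dots> = (\<Sum>j=0..p. 2 ^ (m + 1) * (1 / fact p) * (pochhammer (- real p) j / fact j
          * pochhammer (real m + 1 + real j + 1) (p - j) * (2 * x) ^ j))"
    using laguerre_binomial_term[OF assms] by (intro sum.cong refl) auto
  also have "\<dots> = 2 ^ (m + 1) * laguerre p (real m + 1) (2 * x)"
    unfolding laguerre_def by (simp add: sum_distrib_left)
  finally show ?thesis .
qed

lemma exp_fps_power_nth:
  "(exp_fps t ^ k) $ p = complex_of_real (exp (- real k * t) *
     (\<Sum>i=0..p. real (k choose i) * 2 ^ (k - i) * (- (real k * t)) ^ (p - i) / fact (p - i)))"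
proof -
  define s where "s = complex_of_real t"
  have expand: "exp_fps t ^ k
      = fps_const (exp (- s) ^ k) * ((fps_X + fps_const 2) ^ k * fps_exp (of_nat k * - s))"
    unfolding exp_fps_def s_def
    by (simp add: power_mult_distrib fps_exp_power_mult mult_ac fps_numeral_fps_const)
  have "(exp_fps t ^ k) $ p = exp (- s) ^ k *
      (\<Sum>i=0..p. (of_nat (k choose i) * 2 ^ (k - i)) * ((of_nat k * - s) ^ (p - i) / of_nat (fact (p - i))))"
    unfolding expand fps_mult_left_const_nth
    by (simp only: fps_mult_nth fps_X_plus_const_power_nth fps_exp_nth)
  also have "\<dots> = complex_of_real (exp (- real k * t) *
     (\<Sum>i=0..p. real (k choose i) * 2 ^ (k - i) * (- (real k * t)) ^ (p - i) / fact (p - i)))"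
    by (simp add: s_def exp_of_nat_mult[symmetric] sum_distrib_left mult_ac exp_of_real[symmetric])
  finally show ?thesis .
qed

lemma kappa_fps_power_nth: "(kappa_fps \<kappa> ^ n) $ m = complex_of_real (Ppoly n m (\<kappa>\<^sup>2))"
proof -
  define c where "c = (complex_of_real \<kappa>)\<^sup>2"
  define B where "B = fps_binomial (-2 :: complex)"
  have "inverse ((1 + fps_X)\<^sup>2) = B"
    unfolding B_def using fps_binomial_minus_of_nat[of 2, where 'a=complex] by simp
  then have kappa: "kappa_fps \<kappa> = fps_const (- c) * B + 1"
    unfolding kappa_fps_def c_def by (simp add: fps_const_neg[symmetric] del: fps_const_neg)
  have "kappa_fps \<kappa> ^ n = (\<Sum>j\<le>n. fps_const (of_nat (n choose j) * (- c) ^ j) * fps_binomial (of_nat j * -2))"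
    unfolding kappa binomial_ring
    by (intro sum.cong refl) (simp add: power_mult_distrib B_def fps_binomial_power fps_of_nat[symmetric] mult_ac)
  then have "(kappa_fps \<kappa> ^ n) $ m = (\<Sum>j\<le>n. of_nat (n choose j) * (- c) ^ j * ((of_nat j * -2) gchoose m))"
    by (simp add: fps_sum_nth)
  also have "\<dots> = (\<Sum>j\<le>n. of_nat (n choose j) * (- c) ^ j * ((-1) ^ m * pochhammer (2 * of_nat j) m / fact m))"
    by (intro sum.cong refl) (simp add: gbinomial_pochhammer mult_ac)
  also have "\<dots> = complex_of_real (Ppoly n m (\<kappa>\<^sup>2))"
    unfolding Ppoly_def c_def
    by (simp add: atMost_atLeast0 sum_distrib_left pochhammer_of_real[symmetric] mult_ac)
  finally show ?thesis .
qed

lemma kappa_exp_fps_nth: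
  assumes "k \<ge> 1"
  shows "(kappa_fps \<kappa> ^ n * exp_fps t ^ k) $ (k - 1) = complex_of_real (2 * exp (- real k * t) *
           (\<Sum>m=0..k-1. laguerre (k - m - 1) (real m + 1) (2 * real k * t) * 2 ^ m * Ppoly n m (\<kappa>\<^sup>2)))"
proof -
  have "(kappa_fps \<kappa> ^ n * exp_fps t ^ k) $ (k - 1)
      = (\<Sum>m=0..k-1. (kappa_fps \<kappa> ^ n) $ m * (exp_fps t ^ k) $ (k - 1 - m))"
    by (rule fps_mult_nth)
  also have "\<dots> = (\<Sum>m=0..k-1. complex_of_real (Ppoly n m (\<kappa>\<^sup>2) *
      (exp (- real k * t) * (2 ^ (m + 1) * laguerre (k - m - 1) (real m + 1) (2 * real k * t)))))"
  proof (intro sum.cong refl)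
    fix m assume "m \<in> {0..k-1}"
    then have "k = m + 1 + (k - 1 - m)"
      using assms by auto
    from laguerre_binomial_sum[OF this, of "real k * t"]
    show "(kappa_fps \<kappa> ^ n) $ m * (exp_fps t ^ k) $ (k - 1 - m) = complex_of_real (Ppoly n m (\<kappa>\<^sup>2) *
        (exp (- real k * t) * (2 ^ (m + 1) * laguerre (k - m - 1) (real m + 1) (2 * real k * t))))"
      by (simp add: kappa_fps_power_nth exp_fps_power_nth mult.assoc diff_commute[of k 1 m])
  qed
  also have "\<dots> = complex_of_real (2 * exp (- real k * t) *
           (\<Sum>m=0..k-1. laguerre (k - m - 1) (real m + 1) (2 * real k * t) * 2 ^ m * Ppoly n m (\<kappa>\<^sup>2)))"
    by (simp only: of_real_sum[symmetric]) (simp add: sum_distrib_left mult_ac)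
  finally show ?thesis .
qed

lemma a_coef_formula:
  assumes "\<kappa>\<^sup>2 \<noteq> 1" and "n \<ge> 1"
  shows "a_coef \<kappa> t n = complex_of_real
         (2 / (2 ^ (2 * n) * real n) *
          (\<Sum>k=1..n. real ((2 * n) choose (n - k)) * exp (- real k * t) *
             (\<Sum>m=0..k-1. laguerre (k - m - 1) (real m + 1) (2 * real k * t) * 2 ^ m
                            * Ppoly n m (\<kappa> ^ 2))))"
proof -
  have four_pow: "(2::complex) ^ (2 * n) = 4 ^ n"
    by (simp add: power_mult)
  have "lag_base_fps \<kappa> t ^ n
      = fps_const ((1/4) ^ n) * (kappa_fps \<kappa> ^ n * (1 + fps_X * inverse (exp_fps t)) ^ (2 * n) * exp_fps t ^ n)"
    unfolding lag_base_fps_def by (simp add: power_mult_distrib power_mult[symmetric] mult_ac)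
  then have "(lag_base_fps \<kappa> t ^ n) $ (n - 1)
      = (1/4) ^ n * (\<Sum>k=1..n. of_nat (2 * n choose (n - k)) * (kappa_fps \<kappa> ^ n * exp_fps t ^ k) $ (k - 1))"
    using fps_nth_mult_one_plus_X_power[OF inverse_mult_eq_1[OF exp_fps_nth_0] assms(2)]
    by (simp only: fps_mult_left_const_nth)
  also have "\<dots> = (1/4) ^ n * (\<Sum>k=1..n. of_nat (2 * n choose (n - k)) * complex_of_real (2 * exp (- real k * t) *
           (\<Sum>m=0..k-1. laguerre (k - m - 1) (real m + 1) (2 * real k * t) * 2 ^ m * Ppoly n m (\<kappa>\<^sup>2))))"
    by (intro arg_cong[where f="\<lambda>x. (1/4) ^ n * x"] sum.cong refl) (subst kappa_exp_fps_nth, auto)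
  finally show ?thesis
    using assms four_pow by (simp add: a_coef_eq_fps_nth power_one_over sum_distrib_left field_simps)
qed

theorem proposition3p1:
  fixes t \<kappa> :: real
  assumes "t > 0" and "-1 < \<kappa>" and "\<kappa> < 1"
  shows "phi \<kappa> t 1 = 0 \<and> phi \<kappa> t field_differentiable at 1 \<and> deriv (phi \<kappa> t) 1 \<noteq> 0
    \<and> (\<exists>r>0. \<forall>u. norm u < r \<longrightarrow>
          summable (\<lambda>n. a_coef \<kappa> t (Suc n) * u ^ Suc n) \<and>
          phi \<kappa> t (1 + (\<Sum>n. a_coef \<kappa> t (Suc n) * u ^ Suc n)) = u)
    \<and> (\<forall>n\<ge>1. a_coef \<kappa> t n = complex_of_real
         (2 / (2 ^ (2 * n) * real n) *
          (\<Sum>k=1..n. real ((2 * n) choose (n - k)) * exp (- real k * t) *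
             (\<Sum>m=0..k-1. laguerre (k - m - 1) (real m + 1) (2 * real k * t) * 2 ^ m
                            * Ppoly n m (\<kappa> ^ 2)))))"
proof -
  \<comment> \<open>The argument works for every real \<open>t\<close>.\<close>
  have \<kappa>: "\<kappa>\<^sup>2 \<noteq> 1"
    using assms(2,3) by (simp add: abs_square_less_1 less_imp_neq)
  have phi: "phi \<kappa> t = (\<lambda>z. (z - 1) * psi \<kappa> t z)"
    by (simp add: fun_eq_iff phi_eq_mult_psi)
  have phi_deriv: "(phi \<kappa> t has_field_derivative psi \<kappa> t 1) (at 1)"
    unfolding phi using analytic_on_imp_differentiable_at[OF psi_analytic[OF \<kappa>]]
    by (intro simple_zero_has_field_derivative) simp
  have "phi \<kappa> t field_differentiable at 1" "deriv (phi \<kappa> t) 1 \<noteq> 0"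
    using phi_deriv DERIV_imp_deriv[OF phi_deriv] psi_at_1_neq_0[OF \<kappa>, of t] by (auto simp: field_differentiable_def)
  moreover have "phi \<kappa> t 1 = 0"
    by (simp add: phi)
  moreover have "\<exists>r>0. \<forall>u. norm u < r \<longrightarrow>
          summable (\<lambda>n. a_coef \<kappa> t (Suc n) * u ^ Suc n) \<and>
          phi \<kappa> t (1 + (\<Sum>n. a_coef \<kappa> t (Suc n) * u ^ Suc n)) = u"
    unfolding a_coef_eq_lagrange_coeff[OF \<kappa>]
    using analytic_lagrange_inversion[OF phi_eq_mult_psi psi_analytic[OF \<kappa>] psi_at_1_neq_0[OF \<kappa>]] .
  ultimately show ?thesis
    using a_coef_formula[OF \<kappa>] by blast
qed

end
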